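(* Let $H$ be a reduced double-well type potential and $h$ its Peierls barrier. Then \begin{enumerate} \item $h(0^\infty,x)=0$ for all $x\in[0]$ (in particular $h(0^\infty,0^\infty)=0$); \item $h(0^\infty,x)=\inf_{k\ge n}H_k^0$ for all $x\in[1^n0]$, $n\ge1$; in particular $h(0^\infty,1^\infty)=H_\infty^0$; \item $\liminf_{x\to0^\infty,\,x\neq 0^\infty}h(x,0^\infty)=H_{min}^0+H_\infty^1$; \item $h(1^\infty,x)=0$ for all $x\in[1]$ (in particular $h(1^\infty,1^\infty)=0$); \item $h(1^\infty,x)=\inf_{k\ge n}H_k^1$ for all $x\in[0^n1]$, $n\ge1$; in particular $h(1^\infty,0^\infty)=H_\infty^1$; \item $\liminf_{x\to1^\infty,\,x\neq1^\infty}h(x,1^\infty)=H_{min}^1+H_\infty^0$. \end{enumerate}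
   Context: $\Sigma:=\{0,1\}^{\mathbb N}$, $\sigma$ the left shift, cylinders $[i_0\dots i_{n-1}]$; $x\stackrel{n}{=}y$ means $x_j=y_j$ for $0\le j<n$; $\mathrm{var}(H,n):=\sup\{|H(x)-H(y)|:x\stackrel{n}{=}y\}$. A reduced double-well type potential is a continuous nonnegative $H:\Sigma\to\mathbb R$ with $\sum_n\mathrm{var}(H,n)<\infty$ such that $H=0$ on $[00]\cup[11]$, $H=H_n^0>0$ on $[01^n0]$, $H=H_n^1>0$ on $[10^n1]$ for $n\ge1$, and $\sum_{k\ge1}\sup_{n\ge0}|H_k^i-H_{k+n}^i|<\infty$ ($i=0,1$). Set $H_\infty^i:=\lim_nH_n^i$, $H_{min}^i:=\inf_{n\ge1}H_n^i$. $\bar H:=\lim_{n}\inf_{x}\frac1n\sum_{k=0}^{n-1}H(\sigma^kx)$ (here $\bar H=0$). Peierls barrier: $h(x,y):=\lim_{p\to\infty}\lim_{n\to\infty}S_n^p(x,y)$, $S_n^p(x,y):=\inf\{\sum_{i=0}^{k-1}[H(\sigma^iz)-\bar H]:k\ge n,\ z\stackrel{p}{=}x,\ \sigma^k(z)\stackrel{p}{=}y\}$. *)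

theory Defs
  imports "HOL-Analysis.Analysis"
begin

text \<open>Sigma = {0,1}^N is modelled as nat => bool, with 0 = False and 1 = True.
  It carries the product topology (bool discrete) from HOL-Analysis.\<close>

type_synonym sym_seq = "nat \<Rightarrow> bool"

definition shift :: "sym_seq \<Rightarrow> sym_seq" where
  "shift x = (\<lambda>j. x (Suc j))"

definition agree :: "nat \<Rightarrow> sym_seq \<Rightarrow> sym_seq \<Rightarrow> bool" where
  "agree n x y \<longleftrightarrow> (\<forall>j<n. x j = y j)"

definition var :: "(sym_seq \<Rightarrow> real) \<Rightarrow> nat \<Rightarrow> ereal" where
  "var H n = (SUP p \<in> {(x, y). agree n x y}. ereal \<bar>H (fst p) - H (snd p)\<bar>)"

definition zeros :: sym_seq where "zeros = (\<lambda>_. False)"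
definition ones :: sym_seq where "ones = (\<lambda>_. True)"

text \<open>Reduced double-well type potential, with H0 n = H_n^0 and H1 n = H_n^1 (n >= 1).\<close>
definition reduced_double_well :: "(sym_seq \<Rightarrow> real) \<Rightarrow> (nat \<Rightarrow> real) \<Rightarrow> (nat \<Rightarrow> real) \<Rightarrow> bool" where
  "reduced_double_well H H0 H1 \<longleftrightarrow>
     continuous_on UNIV H \<and> (\<forall>x. H x \<ge> 0) \<and>
     (\<Sum>n. var H n) < \<infinity> \<and>
     (\<forall>x. (x 0 = x 1) \<longrightarrow> H x = 0) \<and>
     (\<forall>n\<ge>1. H0 n > 0 \<and> H1 n > 0) \<and>
     (\<forall>n\<ge>1. \<forall>x. (\<not> x 0 \<and> (\<forall>j\<in>{1..n}. x j) \<and> \<not> x (Suc n)) \<longrightarrow> H x = H0 n) \<and>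
     (\<forall>n\<ge>1. \<forall>x. (x 0 \<and> (\<forall>j\<in>{1..n}. \<not> x j) \<and> x (Suc n)) \<longrightarrow> H x = H1 n) \<and>
     (\<Sum>k. (SUP n. ereal \<bar>H0 (Suc k) - H0 (Suc k + n)\<bar>)) < \<infinity> \<and>
     (\<Sum>k. (SUP n. ereal \<bar>H1 (Suc k) - H1 (Suc k + n)\<bar>)) < \<infinity>"

definition H_inf :: "(nat \<Rightarrow> real) \<Rightarrow> real" where
  "H_inf Hs = lim Hs"

definition H_min :: "(nat \<Rightarrow> real) \<Rightarrow> real" where
  "H_min Hs = (INF n \<in> {1..}. Hs n)"

definition Hbar :: "(sym_seq \<Rightarrow> real) \<Rightarrow> real" where
  "Hbar H = lim (\<lambda>n. INF x. (1 / real n) * (\<Sum>k<n. H ((shift ^^ k) x)))"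

definition S_peierls :: "(sym_seq \<Rightarrow> real) \<Rightarrow> nat \<Rightarrow> nat \<Rightarrow> sym_seq \<Rightarrow> sym_seq \<Rightarrow> ereal" where
  "S_peierls H p n x y =
     (INF kz \<in> {(k, z). k \<ge> n \<and> agree p z x \<and> agree p ((shift ^^ k) z) y}.
        ereal (\<Sum>i<fst kz. H ((shift ^^ i) (snd kz)) - Hbar H))"

definition peierls :: "(sym_seq \<Rightarrow> real) \<Rightarrow> sym_seq \<Rightarrow> sym_seq \<Rightarrow> ereal" where
  "peierls H x y = lim (\<lambda>p. lim (\<lambda>n. S_peierls H p n x y))"

end

theory Submission
  imports Defs
begin

text \<open>Since \<open>H\<close> vanishes on \<open>[00] \<union> [11]\<close>, the action of an orbit segment is the sum of the
  energies \<open>H0 m\<close>, \<open>H1 m\<close> of the blocks \<open>0 1^m 0\<close>, \<open>1 0^m 1\<close> it enters, where a block that never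
  ends costs \<open>H(0 1^\<infinity>) = H_inf H0\<close> resp. \<open>H(1 0^\<infinity>) = H_inf H1\<close>; in particular \<open>Hbar H = 0\<close>.
  An orbit segment from near \<open>0^\<infinity>\<close> into \<open>[1^n 0]\<close> leaves its last \<open>0\<close> into a block of at least
  \<open>n\<close> ones and so costs at least \<open>inf_{k\<ge>n} H0 k\<close>, while the orbit of \<open>0^a 1^(m-n) x\<close> costs
  exactly \<open>H0 m\<close>. An orbit segment from some \<open>x \<noteq> 0^\<infinity>\<close> near \<open>0^\<infinity>\<close> back to \<open>0^\<infinity>\<close> pays for a
  transition \<open>0 \<rightarrow> 1\<close>, at least \<open>H_min H0\<close>, and later for a transition \<open>1 \<rightarrow> 0\<close> into a long block of
  zeros, nearly \<open>H_inf H1\<close>; the point \<open>0^a 1^m 0^\<infinity>\<close> shows that this is sharp. The statements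
  about \<open>1^\<infinity>\<close> follow by exchanging the symbols \<open>0\<close> and \<open>1\<close>.\<close>

lemma funpow_shift: "(shift ^^ i) z = (\<lambda>j. z (i + j))"
  by (induction i) (auto simp: shift_def)

lemma agree_mono: "agree q x y \<Longrightarrow> p \<le> q \<Longrightarrow> agree p x y"
  by (auto simp: agree_def)

lemma agree_funpow_shiftD:
  assumes "agree p ((shift ^^ k) z) y" "k \<le> j" "j < k + p"
  shows "z j = y (j - k)"
proof -
  have "j - k < p" "k + (j - k) = j"
    using assms(2,3) by auto
  with assms(1) show ?thesis
    by (metis agree_def funpow_shift)
qed

lemma ereal_le_INF_real:
  assumes "A \<noteq> {}" "bdd_below (f ` A)" "\<And>a. a \<in> A \<Longrightarrow> y \<le> ereal (f a)"
  shows "y \<le> ereal (INF a\<in>A. f a)"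
proof (rule ereal_le_epsilon2)
  fix e :: real assume "0 < e"
  then have "(INF a\<in>A. f a) < (INF a\<in>A. f a) + e"
    by simp
  then obtain a where "a \<in> A" "f a < (INF a\<in>A. f a) + e"
    using assms(1,2) by (subst (asm) cInf_less_iff) auto
  with assms(3) show "y \<le> ereal (INF a\<in>A. f a) + ereal e"
    by (metis ereal_less_eq(3) order.trans less_imp_le plus_ereal.simps(1))
qed

section \<open>Cylinders\<close>

lemma open_cylinder: "open {x::sym_seq. agree p x a}"
proof -
  have "open {x::sym_seq. \<forall>i\<in>{..<p}. x (id i) \<in> {a i}}"
    by (rule product_topology_basis') (auto intro: open_discrete)
  moreover have "{x::sym_seq. \<forall>i\<in>{..<p}. x (id i) \<in> {a i}} = {x. agree p x a}"
    by (auto simp: agree_def)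
  ultimately show ?thesis
    by simp
qed

lemma cylinder_subset_open:
  assumes "open (U::sym_seq set)" "a \<in> U"
  shows "\<exists>p. {x. agree p x a} \<subseteq> U"
proof -
  from assms have "openin (product_topology (\<lambda>i. euclidean) UNIV) U"
    by (simp add: open_fun_def)
  from product_topology_open_contains_basis[OF this assms(2)] obtain X where
    X: "a \<in> (\<Pi>\<^sub>E i\<in>UNIV. X i)" "finite {i. X i \<noteq> topspace euclidean}"
      "(\<Pi>\<^sub>E i\<in>UNIV. X i) \<subseteq> U"
    by blast
  from finite_nat_bounded[OF X(2)] obtain p where p: "{i. X i \<noteq> UNIV} \<subseteq> {..<p}"
    by auto
  have "{x. agree p x a} \<subseteq> (\<Pi>\<^sub>E i\<in>UNIV. X i)"
  proof (clarsimp simp: PiE_iff)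
    fix x i assume "agree p x a"
    show "x i \<in> X i"
    proof (cases "i < p")
      case True
      with \<open>agree p x a\<close> X(1) show ?thesis
        by (auto simp: agree_def PiE_iff)
    next
      case False
      with p have "X i = UNIV"
        by blast
      then show ?thesis
        by simp
    qed
  qed
  then have "{x. agree p x a} \<subseteq> U"
    using X(3) by (rule subset_trans)
  then show ?thesis ..
qed

lemma eventually_at_cylinder:
  "eventually P (at (a::sym_seq)) \<longleftrightarrow> (\<exists>p. \<forall>x. agree p x a \<and> x \<noteq> a \<longrightarrow> P x)"
proof
  assume "eventually P (at a)"
  then obtain S where S: "open S" "a \<in> S" "\<forall>x\<in>S. x \<noteq> a \<longrightarrow> P x"
    unfolding eventually_at_topological by auto
  from cylinder_subset_open[OF S(1,2)] obtain p where "{x. agree p x a} \<subseteq> S"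
    by blast
  then have "\<forall>x. agree p x a \<and> x \<noteq> a \<longrightarrow> P x"
    using S(3) by auto
  then show "\<exists>p. \<forall>x. agree p x a \<and> x \<noteq> a \<longrightarrow> P x" ..
next
  assume "\<exists>p. \<forall>x. agree p x a \<and> x \<noteq> a \<longrightarrow> P x"
  then obtain p where "\<forall>x. agree p x a \<and> x \<noteq> a \<longrightarrow> P x" ..
  moreover have "a \<in> {x. agree p x a}"
    by (simp add: agree_def)
  ultimately show "eventually P (at a)"
    unfolding eventually_at_topological using open_cylinder by blast
qed

lemma LIMSEQ_coordinatewise:
  fixes X :: "nat \<Rightarrow> sym_seq"
  assumes "\<And>j. eventually (\<lambda>m. X m j = y j) sequentially"
  shows "X \<longlonglongrightarrow> y"
proof (rule topological_tendstoI)
  fix S assume "open S" "y \<in> S"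
  then obtain p where p: "{x. agree p x y} \<subseteq> S"
    using cylinder_subset_open by blast
  have "eventually (\<lambda>m. \<forall>j\<in>{..<p}. X m j = y j) sequentially"
    using assms by (intro eventually_ball_finite) auto
  then show "eventually (\<lambda>m. X m \<in> S) sequentially"
    by eventually_elim (use p in \<open>auto simp: agree_def\<close>)
qed

lemma Liminf_at_eqI:
  fixes f :: "sym_seq \<Rightarrow> ereal"
  assumes "eventually (\<lambda>x. ereal c \<le> f x) (at a)"
    and "\<And>p e. e > 0 \<Longrightarrow> \<exists>x. agree p x a \<and> x \<noteq> a \<and> f x \<le> ereal (c + e)"
  shows "Liminf (at a) f = ereal c"
proof (rule antisym)
  show "ereal c \<le> Liminf (at a) f"
    unfolding le_Liminf_iff using assms(1) by (auto elim: eventually_mono)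
next
  show "Liminf (at a) f \<le> ereal c"
    unfolding Liminf_def
  proof (rule SUP_least)
    fix P assume "P \<in> {P. eventually P (at a)}"
    then obtain p where p: "\<forall>x. agree p x a \<and> x \<noteq> a \<longrightarrow> P x"
      unfolding eventually_at_cylinder by auto
    show "(INF x\<in>Collect P. f x) \<le> ereal c"
    proof (rule ereal_le_epsilon2)
      fix e :: real assume "0 < e"
      with assms(2) obtain x where x: "agree p x a" "x \<noteq> a" "f x \<le> ereal (c + e)"
        by blast
      then have "(INF x\<in>Collect P. f x) \<le> f x"
        using p by (intro INF_lower) auto
      with x(3) show "(INF x\<in>Collect P. f x) \<le> ereal c + ereal e"
        by simp
    qed
  qed
qed

section \<open>Exchanging the symbols 0 and 1\<close>

definition flip :: "sym_seq \<Rightarrow> sym_seq" where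
  "flip x = (\<lambda>j. \<not> x j)"

lemma flip_flip [simp]: "flip (flip x) = x"
  by (simp add: flip_def)

lemma flip_zeros [simp]: "flip zeros = ones" and flip_ones [simp]: "flip ones = zeros"
  by (auto simp: flip_def zeros_def ones_def)

lemma funpow_shift_flip: "(shift ^^ i) (flip z) = flip ((shift ^^ i) z)"
  by (simp add: funpow_shift flip_def)

lemma agree_flip_iff [simp]: "agree p (flip x) y \<longleftrightarrow> agree p x (flip y)"
  by (auto simp: agree_def flip_def)

lemma filtermap_flip_at: "filtermap flip (at a) = at (flip a)"
proof (rule filter_eqI)
  fix P
  have "(\<forall>x. agree p x a \<and> x \<noteq> a \<longrightarrow> P (flip x)) \<longleftrightarrow>
        (\<forall>x. agree p x (flip a) \<and> x \<noteq> flip a \<longrightarrow> P x)" for p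
    by (metis agree_flip_iff flip_flip)
  then show "eventually P (filtermap flip (at a)) \<longleftrightarrow> eventually P (at (flip a))"
    unfolding eventually_filtermap eventually_at_cylinder by simp
qed

lemma inj_flip: "inj flip"
  by (metis flip_flip injI)

lemma Liminf_at_flip: "Liminf (at (flip a)) f = Liminf (at a) (\<lambda>x. f (flip x))"
  using Liminf_filtermap_eq[OF inj_flip, of "at a" f] by (simp add: filtermap_flip_at)

lemma Hbar_flip: "Hbar (H \<circ> flip) = Hbar H"
proof -
  have "range (\<lambda>x. g (flip x)) = range g" for g :: "sym_seq \<Rightarrow> real"
    by (metis flip_flip image_image surj_def)
  from this[of "\<lambda>x. 1 / real n * (\<Sum>k<n. H ((shift ^^ k) x))" for n] show ?thesis
    unfolding Hbar_def by (simp add: funpow_shift_flip)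
qed

lemma S_peierls_flip: "S_peierls (H \<circ> flip) p N (flip x) (flip y) = S_peierls H p N x y"
proof -
  define A where "A = {(k, z). N \<le> k \<and> agree p z x \<and> agree p ((shift ^^ k) z) y}"
  have "{(k, z). N \<le> k \<and> agree p z (flip x) \<and> agree p ((shift ^^ k) z) (flip y)} =
        (\<lambda>(k, z). (k, flip z)) ` A"
  proof (intro set_eqI iffI)
    fix kz assume "kz \<in> {(k, z). N \<le> k \<and> agree p z (flip x) \<and> agree p ((shift ^^ k) z) (flip y)}"
    then obtain k z where "kz = (k, z)" "(k, flip z) \<in> A"
      by (auto simp: A_def funpow_shift_flip)
    then show "kz \<in> (\<lambda>(k, z). (k, flip z)) ` A"
      by (intro image_eqI[of _ _ "(k, flip z)"]) simp_all
  qed (auto simp: A_def funpow_shift_flip)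
  then show ?thesis
    unfolding S_peierls_def A_def by (simp add: image_comp case_prod_beta' funpow_shift_flip Hbar_flip)
qed

lemma peierls_flip: "peierls (H \<circ> flip) (flip x) (flip y) = peierls H x y"
  by (simp add: peierls_def S_peierls_flip)

lemma peierls_ones_eq: "peierls H ones x = peierls (H \<circ> flip) zeros (flip x)"
  using peierls_flip[of H ones x] by simp

section \<open>Orbit segments and the Peierls barrier\<close>

abbreviation action :: "(sym_seq \<Rightarrow> real) \<Rightarrow> nat \<Rightarrow> sym_seq \<Rightarrow> real" where
  "action H k z \<equiv> \<Sum>i<k. H ((shift ^^ i) z)"

lemma action_add: "action H (a + k) z = action H a z + action H k ((shift ^^ a) z)"
  by (induction k) (simp_all add: funpow_shift ac_simps)

lemma peierls_eq_SUP: "peierls H x y = (SUP p. SUP N. S_peierls H p N x y)"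
proof -
  have mono_N: "incseq (\<lambda>N. S_peierls H p N x y)" for p
    unfolding incseq_def S_peierls_def by (auto intro: INF_superset_mono)
  have mono_p: "incseq (\<lambda>p. SUP N. S_peierls H p N x y)"
    unfolding incseq_def S_peierls_def
    by (auto intro!: SUP_mono INF_superset_mono intro: agree_mono)
  have "lim (\<lambda>N. S_peierls H p N x y) = (SUP N. S_peierls H p N x y)" for p
    by (rule limI) (rule LIMSEQ_SUP[OF mono_N])
  then show ?thesis
    unfolding peierls_def by (simp add: limI[OF LIMSEQ_SUP[OF mono_p]])
qed

lemma peierls_le_if_orbits:
  assumes "Hbar H = 0"
    and "\<And>p N. \<exists>k z. N \<le> k \<and> agree p z x \<and> agree p ((shift ^^ k) z) y \<and> action H k z \<le> c"
  shows "peierls H x y \<le> ereal c"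
  unfolding peierls_eq_SUP
proof (intro SUP_least)
  fix p N
  obtain k z where "N \<le> k" "agree p z x" "agree p ((shift ^^ k) z) y" "action H k z \<le> c"
    using assms(2) by blast
  then show "S_peierls H p N x y \<le> ereal c"
    unfolding S_peierls_def using assms(1) by (intro INF_lower2[of "(k, z)"]) auto
qed

lemma peierls_ge_if_orbits:
  assumes "Hbar H = 0"
    and "\<And>e. e > 0 \<Longrightarrow> \<exists>p. \<forall>k z. agree p z x \<and> agree p ((shift ^^ k) z) y \<longrightarrow> c - e \<le> action H k z"
  shows "ereal c \<le> peierls H x y"
proof (rule ereal_le_epsilon2)
  fix e :: real assume "0 < e"
  from assms(2)[OF this] obtain p where p: "\<forall>k z. agree p z x \<and> agree p ((shift ^^ k) z) y \<longrightarrow> c - e \<le> action H k z"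
    by blast
  have "ereal (c - e) \<le> S_peierls H p 0 x y"
    unfolding S_peierls_def using p assms(1) by (auto intro!: INF_greatest)
  also have "\<dots> \<le> peierls H x y"
    unfolding peierls_eq_SUP by (rule SUP_upper2[OF UNIV_I]) (rule SUP_upper[OF UNIV_I])
  finally have "ereal (c - e) + ereal e \<le> peierls H x y + ereal e"
    by (rule add_right_mono)
  then show "ereal c \<le> peierls H x y + ereal e"
    by simp
qed

section \<open>Double-well potentials\<close>

text \<open>The sequences \<open>\<lambda>j. j \<noteq> 0\<close> and \<open>\<lambda>j. j = 0\<close> are \<open>0 1^\<infinity>\<close> and \<open>1 0^\<infinity>\<close>.\<close>

locale double_well =
  fixes H :: "sym_seq \<Rightarrow> real" and H0 H1 :: "nat \<Rightarrow> real"
  assumes nonneg: "H x \<ge> 0"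
    and flat: "x 0 = x 1 \<Longrightarrow> H x = 0"
    and block0: "\<lbrakk>n \<ge> 1; \<not> x 0; \<And>j. 1 \<le> j \<Longrightarrow> j \<le> n \<Longrightarrow> x j; \<not> x (Suc n)\<rbrakk> \<Longrightarrow> H x = H0 n"
    and block1: "\<lbrakk>n \<ge> 1; x 0; \<And>j. 1 \<le> j \<Longrightarrow> j \<le> n \<Longrightarrow> \<not> x j; x (Suc n)\<rbrakk> \<Longrightarrow> H x = H1 n"
    and LIMSEQ_H0: "H0 \<longlonglongrightarrow> H (\<lambda>j. j \<noteq> 0)"
    and LIMSEQ_H1: "H1 \<longlonglongrightarrow> H (\<lambda>j. j = 0)"

lemma reduced_double_well_imp_double_well:
  assumes "reduced_double_well H H0 H1"
  shows "double_well H H0 H1"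
proof -
  have cont: "continuous_on UNIV H"
    and block0: "\<And>n x. n \<ge> 1 \<Longrightarrow> \<not> x 0 \<Longrightarrow> (\<forall>j\<in>{1..n}. x j) \<Longrightarrow> \<not> x (Suc n) \<Longrightarrow> H x = H0 n"
    and block1: "\<And>n x. n \<ge> 1 \<Longrightarrow> x 0 \<Longrightarrow> (\<forall>j\<in>{1..n}. \<not> x j) \<Longrightarrow> x (Suc n) \<Longrightarrow> H x = H1 n"
    using assms unfolding reduced_double_well_def by auto
  have "(\<lambda>m. (\<lambda>j. 0 < j \<and> j \<le> m)) \<longlonglongrightarrow> (\<lambda>j::nat. j \<noteq> 0)"
    by (rule LIMSEQ_coordinatewise) (auto intro: eventually_sequentiallyI)
  then have "(\<lambda>m. H (\<lambda>j. 0 < j \<and> j \<le> m)) \<longlonglongrightarrow> H (\<lambda>j. j \<noteq> 0)"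
    using continuous_on_tendsto_compose[OF cont] by simp
  moreover have "eventually (\<lambda>m. H (\<lambda>j. 0 < j \<and> j \<le> m) = H0 m) sequentially"
    by (intro eventually_sequentiallyI[of 1] block0) auto
  ultimately have "H0 \<longlonglongrightarrow> H (\<lambda>j. j \<noteq> 0)"
    by (rule Lim_transform_eventually)
  have "(\<lambda>m. (\<lambda>j. \<not> (0 < j \<and> j \<le> m))) \<longlonglongrightarrow> (\<lambda>j::nat. j = 0)"
    by (rule LIMSEQ_coordinatewise) (auto intro: eventually_sequentiallyI)
  then have "(\<lambda>m. H (\<lambda>j. \<not> (0 < j \<and> j \<le> m))) \<longlonglongrightarrow> H (\<lambda>j. j = 0)"
    using continuous_on_tendsto_compose[OF cont] by simp
  moreover have "eventually (\<lambda>m. H (\<lambda>j. \<not> (0 < j \<and> j \<le> m)) = H1 m) sequentially"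
    by (intro eventually_sequentiallyI[of 1] block1) auto
  ultimately have "H1 \<longlonglongrightarrow> H (\<lambda>j. j = 0)"
    by (rule Lim_transform_eventually)
  with \<open>H0 \<longlonglongrightarrow> H (\<lambda>j. j \<noteq> 0)\<close> show ?thesis
    using assms unfolding reduced_double_well_def by unfold_locales auto
qed

context double_well
begin

lemma double_well_flip: "double_well (H \<circ> flip) H1 H0"
proof unfold_locales
  fix x :: sym_seq and n :: nat
  show "0 \<le> (H \<circ> flip) x"
    by (simp add: nonneg)
  show "(H \<circ> flip) x = 0" if "x 0 = x 1"
    using that by (simp add: flat flip_def)
  show "(H \<circ> flip) x = H1 n"
    if "n \<ge> 1" "\<not> x 0" "\<And>j. 1 \<le> j \<Longrightarrow> j \<le> n \<Longrightarrow> x j" "\<not> x (Suc n)"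
    using that by (simp add: block1 flip_def)
  show "(H \<circ> flip) x = H0 n"
    if "n \<ge> 1" "x 0" "\<And>j. 1 \<le> j \<Longrightarrow> j \<le> n \<Longrightarrow> \<not> x j" "x (Suc n)"
    using that by (simp add: block0 flip_def)
  show "H1 \<longlonglongrightarrow> (H \<circ> flip) (\<lambda>j. j \<noteq> 0)" "H0 \<longlonglongrightarrow> (H \<circ> flip) (\<lambda>j. j = 0)"
    using LIMSEQ_H0 LIMSEQ_H1 by (simp_all add: flip_def)
qed

lemma action_nonneg: "0 \<le> action H k z"
  by (simp add: sum_nonneg nonneg)

lemma Hbar_eq_0: "Hbar H = 0"
proof -
  have "H ((shift ^^ k) zeros) = 0" for k
    by (simp add: flat funpow_shift zeros_def)
  then have "(INF x. 1 / real n * action H n x) = 0" for n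
    by (intro cInf_eq_minimum[of 0]) (auto intro!: image_eqI[of _ _ zeros] simp: action_nonneg)
  then show ?thesis
    unfolding Hbar_def by simp
qed

lemma H_le_action: "s < k \<Longrightarrow> H ((shift ^^ s) z) \<le> action H k z"
  by (rule member_le_sum) (simp_all add: nonneg)

lemma H_add_H_le_action:
  assumes "s < k" "t < k" "s \<noteq> t"
  shows "H ((shift ^^ s) z) + H ((shift ^^ t) z) \<le> action H k z"
proof -
  have "H ((shift ^^ s) z) + H ((shift ^^ t) z) = (\<Sum>i\<in>{s, t}. H ((shift ^^ i) z))"
    using assms by simp
  also have "\<dots> \<le> action H k z"
    using assms by (intro sum_mono2) (simp_all add: nonneg)
  finally show ?thesis .
qed

lemma action_eq_sum_transitions:
  assumes "A \<subseteq> {..<k}" "\<And>i. i < k \<Longrightarrow> i \<notin> A \<Longrightarrow> z i = z (Suc i)"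
  shows "action H k z = (\<Sum>i\<in>A. H ((shift ^^ i) z))"
  using assms by (intro sum.mono_neutral_right) (auto simp: flat funpow_shift)

lemma H_shift_block0:
  assumes "m \<ge> 1" "\<not> z s" "\<And>j. s < j \<Longrightarrow> j \<le> s + m \<Longrightarrow> z j" "\<not> z (s + m + 1)"
  shows "H ((shift ^^ s) z) = H0 m"
  using assms by (intro block0) (auto simp: funpow_shift)

lemma H0_nonneg:
  assumes "n \<ge> 1"
  shows "0 \<le> H0 n"
proof -
  have "H (\<lambda>j. 0 < j \<and> j \<le> n) = H0 n"
    using assms by (intro block0) auto
  with nonneg show ?thesis
    by metis
qed

lemma bdd_below_H0: "bdd_below (H0 ` A)"
proof (rule bdd_belowI[of _ "min (H0 0) 0"])
  fix y assume "y \<in> H0 ` A"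
  then obtain k where "y = H0 k"
    by blast
  then show "min (H0 0) 0 \<le> y"
    using H0_nonneg[of k] by (cases k) auto
qed

lemma INF_H0_le: "n \<le> m \<Longrightarrow> (INF k\<in>{n..}. H0 k) \<le> H0 m"
  by (rule cINF_lower) (simp_all add: bdd_below_H0)

lemma INF_H0_le_limit: "(INF k\<in>{n..}. H0 k) \<le> H (\<lambda>j. j \<noteq> 0)"
  using LIMSEQ_H0 by (rule LIMSEQ_le_const) (auto intro: INF_H0_le)

lemma block0_start_lower_bound:
  assumes "\<not> z t" "m \<ge> 1" "\<And>j. t < j \<Longrightarrow> j \<le> t + m \<Longrightarrow> z j"
    and "\<And>m'. m \<le> m' \<Longrightarrow> c \<le> H0 m'" "c \<le> H (\<lambda>j. j \<noteq> 0)"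
  shows "c \<le> H ((shift ^^ t) z)"
proof (cases "\<forall>j>t. z j")
  case True
  have "(shift ^^ t) z = (\<lambda>j. j \<noteq> 0)"
  proof
    fix j
    show "(shift ^^ t) z j = (j \<noteq> 0)"
      using True assms(1) by (cases j) (auto simp: funpow_shift)
  qed
  with assms(5) show ?thesis
    by simp
next
  case False
  define e where "e = (LEAST e. t < e \<and> \<not> z e)"
  have e: "t < e" "\<not> z e"
    using False LeastI_ex[of "\<lambda>e. t < e \<and> \<not> z e"] unfolding e_def by auto
  have "z j" if "t < j" "j < e" for j
    using not_less_Least[of j "\<lambda>e. t < e \<and> \<not> z e"] that unfolding e_def by blast
  moreover have "t + m < e"
    using assms(3) e by (meson not_le)
  ultimately have "H ((shift ^^ t) z) = H0 (e - 1 - t)"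
    using assms(1,2) e by (intro H_shift_block0) auto
  moreover have "m \<le> e - 1 - t"
    using \<open>t + m < e\<close> by linarith
  ultimately show ?thesis
    using assms(4) by simp
qed

lemma transition01_lower_bound:
  assumes "\<not> z s" "s < k" "m \<ge> 1" "\<And>j. k \<le> j \<Longrightarrow> j < k + m \<Longrightarrow> z j"
    and "\<And>m'. m \<le> m' \<Longrightarrow> c \<le> H0 m'" "c \<le> H (\<lambda>j. j \<noteq> 0)"
  shows "\<exists>t\<ge>s. t < k \<and> c \<le> H ((shift ^^ t) z)"
proof -
  \<comment> \<open>the last \<open>0\<close> before position \<open>k\<close> starts a block of at least \<open>m\<close> ones\<close>
  define t where "t = (GREATEST t. t < k \<and> \<not> z t)"
  have t: "t < k" "\<not> z t" "s \<le> t"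
    using GreatestI_nat[of "\<lambda>t. t < k \<and> \<not> z t" s k] Greatest_le_nat[of "\<lambda>t. t < k \<and> \<not> z t" s k]
      assms(1,2) unfolding t_def by auto
  have run: "z j" if "t < j" "j \<le> t + (k + m - 1 - t)" for j
  proof (cases "j < k")
    case True
    then show ?thesis
      using Greatest_le_nat[of "\<lambda>t. t < k \<and> \<not> z t" j k] that(1) unfolding t_def by force
  next
    case False
    then show ?thesis
      using that(2) t(1) assms(3) by (intro assms(4)) auto
  qed
  have "c \<le> H ((shift ^^ t) z)"
    by (rule block0_start_lower_bound[of z t "k + m - 1 - t"]) (use t(1,2) assms(3,5,6) run in auto)
  with t show ?thesis
    by blast
qed

lemma transition10_lower_bound:
  assumes "z s" "s < k" "m \<ge> 1" "\<And>j. k \<le> j \<Longrightarrow> j < k + m \<Longrightarrow> \<not> z j"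
    and "\<And>m'. m \<le> m' \<Longrightarrow> c \<le> H1 m'" "c \<le> H (\<lambda>j. j = 0)"
  shows "\<exists>t\<ge>s. t < k \<and> c \<le> H ((shift ^^ t) z)"
proof -
  have "\<exists>t\<ge>s. t < k \<and> c \<le> (H \<circ> flip) ((shift ^^ t) (flip z))"
    using assms by (intro double_well.transition01_lower_bound[OF double_well_flip, of "flip z" s k m])
      (simp_all add: flip_def)
  then show ?thesis
    by (simp add: funpow_shift_flip)
qed

lemma action_ge_transition01:
  assumes "\<not> z 0" "m \<ge> 1" "\<And>j. k \<le> j \<Longrightarrow> j < k + m \<Longrightarrow> z j"
    and "\<And>m'. m \<le> m' \<Longrightarrow> c \<le> H0 m'" "c \<le> H (\<lambda>j. j \<noteq> 0)"
  shows "c \<le> action H k z"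
proof -
  have "0 < k"
    using assms(1,2) assms(3)[of 0] by (cases k) auto
  with assms obtain t where "t < k" "c \<le> H ((shift ^^ t) z)"
    using transition01_lower_bound[of z 0 k m c] by blast
  with H_le_action[of t k z] show ?thesis
    by linarith
qed

lemma action_ge_two_transitions:
  assumes "\<not> z 0" "z a" "a < k" "m \<ge> 1" "\<And>j. k \<le> j \<Longrightarrow> j < k + m \<Longrightarrow> \<not> z j"
    and "\<And>m'. m \<le> m' \<Longrightarrow> c \<le> H1 m'" "c \<le> H (\<lambda>j. j = 0)"
  shows "H_min H0 + c \<le> action H k z"
proof -
  have "0 < a"
    using assms(1,2) by (cases a) auto
  then have "\<exists>t\<ge>0. t < a \<and> H_min H0 \<le> H ((shift ^^ t) z)"
    using assms(1,2) INF_H0_le INF_H0_le_limit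
    by (intro transition01_lower_bound[of z 0 a 1]) (auto simp: H_min_def le_less_Suc_eq)
  then obtain t0 where t0: "t0 < a" "H_min H0 \<le> H ((shift ^^ t0) z)"
    by blast
  obtain t1 where t1: "a \<le> t1" "t1 < k" "c \<le> H ((shift ^^ t1) z)"
    using assms(2-7) transition10_lower_bound[of z a k m c] by blast
  have "H ((shift ^^ t0) z) + H ((shift ^^ t1) z) \<le> action H k z"
    using t0 t1 by (intro H_add_H_le_action) auto
  with t0 t1 show ?thesis
    by linarith
qed

lemma peierls_nonneg: "0 \<le> peierls H x y"
proof -
  have "ereal 0 \<le> peierls H x y"
  proof (rule peierls_ge_if_orbits[OF Hbar_eq_0])
    fix e :: real assume "0 < e"
    then have "0 - e \<le> action H k z" for k z
      using action_nonneg[of z k] by linarith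
    then show "\<exists>p. \<forall>k z. agree p z x \<and> agree p ((shift ^^ k) z) y \<longrightarrow> 0 - e \<le> action H k z"
      by blast
  qed
  then show ?thesis
    by (simp add: zero_ereal_def)
qed

lemma peierls_zeros_le:
  assumes "(shift ^^ j) w = x"
  shows "peierls H zeros x \<le> ereal (H (\<lambda>i. i \<noteq> 0 \<and> w (i - 1)) + action H j w)"
proof (rule peierls_le_if_orbits[OF Hbar_eq_0])
  fix p N :: nat
  \<comment> \<open>the orbit of \<open>0^a w\<close> costs nothing before its last \<open>0\<close>\<close>
  define a where "a = Suc (max N p)"
  define z where "z = (\<lambda>i. a \<le> i \<and> w (i - a))"
  have "(shift ^^ (a - 1)) z = (\<lambda>i. i \<noteq> 0 \<and> w (i - 1))"
    by (auto simp: z_def funpow_shift a_def fun_eq_iff)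
  moreover have "action H a z = (\<Sum>i\<in>{a - 1}. H ((shift ^^ i) z))"
    by (rule action_eq_sum_transitions) (auto simp: z_def a_def)
  moreover have "(shift ^^ a) z = w"
    by (simp add: z_def funpow_shift)
  ultimately have "action H (a + j) z = H (\<lambda>i. i \<noteq> 0 \<and> w (i - 1)) + action H j w"
    by (simp add: action_add)
  moreover have "(shift ^^ (a + j)) z = x"
    using assms by (simp add: z_def funpow_shift ac_simps)
  moreover have "agree p z zeros"
    by (auto simp: agree_def z_def zeros_def a_def)
  ultimately show "\<exists>k z. N \<le> k \<and> agree p z zeros \<and> agree p ((shift ^^ k) z) x \<and>
      action H k z \<le> H (\<lambda>i. i \<noteq> 0 \<and> w (i - 1)) + action H j w"
    by (intro exI[of _ "a + j"] exI[of _ z]) (simp add: a_def agree_def)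
qed

lemma peierls_zeros_eq_0:
  assumes "\<not> x 0"
  shows "peierls H zeros x = 0"
proof (rule antisym)
  have "H (\<lambda>i. i \<noteq> 0 \<and> x (i - 1)) = 0"
    using assms by (intro flat) simp
  then show "peierls H zeros x \<le> 0"
    using peierls_zeros_le[of 0 x x] by (simp add: zero_ereal_def)
qed (rule peierls_nonneg)

lemma peierls_zeros_block_le:
  assumes "n \<ge> 1" "\<And>j. j < n \<Longrightarrow> x j" "\<not> x n"
  shows "peierls H zeros x \<le> ereal (INF k\<in>{n..}. H0 k)"
proof (rule ereal_le_INF_real)
  fix m assume "m \<in> {n..}"
  define w where "w = (\<lambda>i. i < m - n \<or> x (i - (m - n)))"
  have "(shift ^^ (m - n)) w = x"
    by (simp add: w_def funpow_shift)
  moreover have "action H (m - n) w = (\<Sum>i\<in>{}. H ((shift ^^ i) w))"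
    by (rule action_eq_sum_transitions) (use assms(1,2) in \<open>auto simp: w_def\<close>)
  moreover have "H (\<lambda>i. i \<noteq> 0 \<and> w (i - 1)) = H0 m"
    by (rule block0) (use assms \<open>m \<in> {n..}\<close> in \<open>auto simp: w_def\<close>)
  ultimately show "peierls H zeros x \<le> ereal (H0 m)"
    using peierls_zeros_le[of "m - n" w x] by simp
qed (simp_all add: bdd_below_H0)

lemma peierls_zeros_block_ge:
  assumes "n \<ge> 1" "\<And>j. j < n \<Longrightarrow> x j"
  shows "ereal (INF k\<in>{n..}. H0 k) \<le> peierls H zeros x"
proof (rule peierls_ge_if_orbits[OF Hbar_eq_0])
  fix e :: real assume "e > 0"
  have "(INF k\<in>{n..}. H0 k) - e \<le> action H k z"
    if "agree n z zeros" "agree n ((shift ^^ k) z) x" for k z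
  proof -
    have "\<not> z 0"
      using that(1) assms(1) by (simp add: agree_def zeros_def)
    moreover have "\<And>j. k \<le> j \<Longrightarrow> j < k + n \<Longrightarrow> z j"
      using agree_funpow_shiftD[OF that(2)] assms(2) by simp
    ultimately have "(INF k\<in>{n..}. H0 k) \<le> action H k z"
      using assms(1) INF_H0_le INF_H0_le_limit by (intro action_ge_transition01[of z n]) auto
    with \<open>e > 0\<close> show ?thesis
      by linarith
  qed
  then show "\<exists>p. \<forall>k z. agree p z zeros \<and> agree p ((shift ^^ k) z) x \<longrightarrow>
      (INF k\<in>{n..}. H0 k) - e \<le> action H k z"
    by blast
qed

lemma peierls_zeros_block:
  assumes "n \<ge> 1" "\<And>j. j < n \<Longrightarrow> x j" "\<not> x n"
  shows "peierls H zeros x = ereal (INF k\<in>{n..}. H0 k)"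
  using assms by (intro antisym peierls_zeros_block_le peierls_zeros_block_ge)

lemma peierls_zeros_ones: "peierls H zeros ones = ereal (H (\<lambda>j. j \<noteq> 0))"
proof (rule antisym)
  show "peierls H zeros ones \<le> ereal (H (\<lambda>j. j \<noteq> 0))"
    using peierls_zeros_le[of 0 ones ones] by (simp add: ones_def)
next
  show "ereal (H (\<lambda>j. j \<noteq> 0)) \<le> peierls H zeros ones"
  proof (rule peierls_ge_if_orbits[OF Hbar_eq_0])
    fix e :: real assume "e > 0"
    from LIMSEQ_D[OF LIMSEQ_H0 this] obtain P where P: "\<And>m. m \<ge> P \<Longrightarrow> \<bar>H0 m - H (\<lambda>j. j \<noteq> 0)\<bar> < e"
      by auto
    have close: "H (\<lambda>j. j \<noteq> 0) - e \<le> H0 m" if "Suc P \<le> m" for m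
      using P[of m] that by linarith
    have "H (\<lambda>j. j \<noteq> 0) - e \<le> action H k z"
      if "agree (Suc P) z zeros" "agree (Suc P) ((shift ^^ k) z) ones" for k z
    proof (rule action_ge_transition01[of z "Suc P"])
      show "\<not> z 0"
        using that(1) by (simp add: agree_def zeros_def)
      show "\<And>j. k \<le> j \<Longrightarrow> j < k + Suc P \<Longrightarrow> z j"
        using agree_funpow_shiftD[OF that(2)] by (simp add: ones_def)
    qed (use close \<open>e > 0\<close> in auto)
    then show "\<exists>p. \<forall>k z. agree p z zeros \<and> agree p ((shift ^^ k) z) ones \<longrightarrow>
        H (\<lambda>j. j \<noteq> 0) - e \<le> action H k z"
      by blast
  qed
qed

lemma peierls_to_zeros_ge:
  assumes "\<not> x 0" "x \<noteq> zeros"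
  shows "ereal (H_min H0 + H (\<lambda>j. j = 0)) \<le> peierls H x zeros"
proof (rule peierls_ge_if_orbits[OF Hbar_eq_0])
  fix e :: real assume "e > 0"
  obtain a where "x a"
    using assms(2) by (auto simp: zeros_def)
  from LIMSEQ_D[OF LIMSEQ_H1 \<open>e > 0\<close>] obtain P where P: "\<And>m. m \<ge> P \<Longrightarrow> \<bar>H1 m - H (\<lambda>j. j = 0)\<bar> < e"
    by auto
  have close: "H (\<lambda>j. j = 0) - e \<le> H1 m" if "Suc P \<le> m" for m
    using P[of m] that by linarith
  have "H_min H0 + (H (\<lambda>j. j = 0) - e) \<le> action H k z"
    if "agree (Suc (a + P)) z x" "agree (Suc (a + P)) ((shift ^^ k) z) zeros" for k z
  proof -
    have shifted: "\<And>j. k \<le> j \<Longrightarrow> j < k + Suc (a + P) \<Longrightarrow> \<not> z j"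
      using agree_funpow_shiftD[OF that(2)] by (simp add: zeros_def)
    have "\<not> z 0" "z a"
      using that(1) assms(1) \<open>x a\<close> by (auto simp: agree_def)
    moreover from this(2) shifted[of a] have "a < k"
      by (cases "a < k") auto
    ultimately show ?thesis
      using shifted close \<open>e > 0\<close> by (intro action_ge_two_transitions[of z a k "Suc P"]) auto
  qed
  then show "\<exists>p. \<forall>k z. agree p z x \<and> agree p ((shift ^^ k) z) zeros \<longrightarrow>
      H_min H0 + H (\<lambda>j. j = 0) - e \<le> action H k z"
    by force
qed

lemma peierls_block_to_zeros_le:
  assumes "a \<ge> 1" "m \<ge> 1"
  shows "peierls H (\<lambda>j. a \<le> j \<and> j < a + m) zeros \<le> ereal (H0 m + H (\<lambda>j. j = 0))"
proof (rule peierls_le_if_orbits[OF Hbar_eq_0])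
  fix p N :: nat
  define x where "x = (\<lambda>j. a \<le> j \<and> j < a + m)"
  have "action H (N + a + m) x = (\<Sum>i\<in>{a - 1, a + m - 1}. H ((shift ^^ i) x))"
    by (rule action_eq_sum_transitions) (use assms in \<open>auto simp: x_def\<close>)
  also have "\<dots> = H ((shift ^^ (a - 1)) x) + H ((shift ^^ (a + m - 1)) x)"
    using assms by simp
  also have "H ((shift ^^ (a - 1)) x) = H0 m"
    by (rule H_shift_block0) (use assms in \<open>auto simp: x_def\<close>)
  also have "(shift ^^ (a + m - 1)) x = (\<lambda>j. j = 0)"
    using assms by (auto simp: x_def funpow_shift fun_eq_iff)
  finally have "action H (N + a + m) x = H0 m + H (\<lambda>j. j = 0)" .
  moreover have "(shift ^^ (N + a + m)) x = zeros"
    by (simp add: x_def zeros_def funpow_shift fun_eq_iff)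
  ultimately show "\<exists>k z. N \<le> k \<and> agree p z (\<lambda>j. a \<le> j \<and> j < a + m) \<and>
      agree p ((shift ^^ k) z) zeros \<and> action H k z \<le> H0 m + H (\<lambda>j. j = 0)"
    unfolding x_def[symmetric] by (intro exI[of _ "N + a + m"] exI[of _ x]) (simp add: agree_def)
qed

lemma Liminf_peierls_to_zeros:
  "Liminf (at zeros) (\<lambda>x. peierls H x zeros) = ereal (H_min H0 + H (\<lambda>j. j = 0))"
proof (rule Liminf_at_eqI)
  show "eventually (\<lambda>x. ereal (H_min H0 + H (\<lambda>j. j = 0)) \<le> peierls H x zeros) (at zeros)"
    unfolding eventually_at_cylinder
    by (intro exI[of _ 1] allI impI peierls_to_zeros_ge) (auto simp: agree_def zeros_def)
next
  fix p :: nat and e :: real assume "e > 0"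
  then have "H_min H0 < H_min H0 + e"
    by simp
  then obtain m where m: "m \<ge> 1" "H0 m < H_min H0 + e"
    unfolding H_min_def using bdd_below_H0 by (subst (asm) cInf_less_iff) auto
  define x where "x = (\<lambda>j. Suc p \<le> j \<and> j < Suc p + m)"
  have "agree p x zeros"
    by (simp add: agree_def x_def zeros_def)
  moreover have "x \<noteq> zeros"
    using m(1) by (auto simp: x_def zeros_def fun_eq_iff intro!: exI[of _ "Suc p"])
  moreover have "peierls H x zeros \<le> ereal (H_min H0 + H (\<lambda>j. j = 0) + e)"
  proof -
    have "peierls H x zeros \<le> ereal (H0 m + H (\<lambda>j. j = 0))"
      using peierls_block_to_zeros_le[of "Suc p" m] m(1) by (simp add: x_def)
    also have "\<dots> \<le> ereal (H_min H0 + H (\<lambda>j. j = 0) + e)"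
      using m(2) by simp
    finally show ?thesis .
  qed
  ultimately show "\<exists>x. agree p x zeros \<and> x \<noteq> zeros \<and>
      peierls H x zeros \<le> ereal (H_min H0 + H (\<lambda>j. j = 0) + e)"
    by blast
qed

lemma peierls_ones_eq_0:
  assumes "x 0"
  shows "peierls H ones x = 0"
  unfolding peierls_ones_eq using assms
  by (intro double_well.peierls_zeros_eq_0[OF double_well_flip]) (simp add: flip_def)

lemma peierls_ones_block:
  assumes "n \<ge> 1" "\<And>j. j < n \<Longrightarrow> \<not> x j" "x n"
  shows "peierls H ones x = ereal (INF k\<in>{n..}. H1 k)"
  unfolding peierls_ones_eq using assms
  by (intro double_well.peierls_zeros_block[OF double_well_flip]) (simp_all add: flip_def)

lemma peierls_ones_zeros: "peierls H ones zeros = ereal (H (\<lambda>j. j = 0))"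
proof -
  have "(H \<circ> flip) (\<lambda>j. j \<noteq> 0) = H (\<lambda>j. j = 0)"
    by (simp add: flip_def)
  then show ?thesis
    unfolding peierls_ones_eq flip_zeros using double_well.peierls_zeros_ones[OF double_well_flip]
    by simp
qed

lemma Liminf_peierls_to_ones:
  "Liminf (at ones) (\<lambda>x. peierls H x ones) = ereal (H_min H1 + H (\<lambda>j. j \<noteq> 0))"
proof -
  have "peierls H (flip x) ones = peierls (H \<circ> flip) x zeros" for x
    using peierls_flip[of H "flip x" ones] by simp
  moreover have "(H \<circ> flip) (\<lambda>j. j = 0) = H (\<lambda>j. j \<noteq> 0)"
    by (simp add: flip_def)
  ultimately show ?thesis
    using Liminf_at_flip[of zeros "\<lambda>x. peierls H x ones"]
      double_well.Liminf_peierls_to_zeros[OF double_well_flip] by simp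
qed

end

theorem proposition3p3:
  fixes H :: "sym_seq \<Rightarrow> real" and H0 H1 :: "nat \<Rightarrow> real"
  assumes "reduced_double_well H H0 H1"
  shows "((\<forall>x. \<not> x 0 \<longrightarrow> peierls H zeros x = 0) \<and> peierls H zeros zeros = 0)
    \<and> ((\<forall>n\<ge>1. \<forall>x. (\<forall>j<n. x j) \<and> \<not> x n \<longrightarrow>
            peierls H zeros x = ereal (INF k \<in> {n..}. H0 k))
         \<and> peierls H zeros ones = ereal (H_inf H0))
    \<and> Liminf (at zeros) (\<lambda>x. peierls H x zeros) = ereal (H_min H0 + H_inf H1)
    \<and> ((\<forall>x. x 0 \<longrightarrow> peierls H ones x = 0) \<and> peierls H ones ones = 0)
    \<and> ((\<forall>n\<ge>1. \<forall>x. (\<forall>j<n. \<not> x j) \<and> x n \<longrightarrow>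
            peierls H ones x = ereal (INF k \<in> {n..}. H1 k))
         \<and> peierls H ones zeros = ereal (H_inf H1))
    \<and> Liminf (at ones) (\<lambda>x. peierls H x ones) = ereal (H_min H1 + H_inf H0)"
proof -
  interpret double_well H H0 H1
    using assms by (rule reduced_double_well_imp_double_well)
  have H_inf: "H_inf H0 = H (\<lambda>j. j \<noteq> 0)" "H_inf H1 = H (\<lambda>j. j = 0)"
    unfolding H_inf_def using LIMSEQ_H0 LIMSEQ_H1 by (simp_all add: limI)
  have "peierls H zeros zeros = 0" "peierls H ones ones = 0"
    using peierls_zeros_eq_0[of zeros] peierls_ones_eq_0[of ones] by (simp_all add: zeros_def ones_def)
  then show ?thesis
    unfolding H_inf
    using peierls_zeros_eq_0 peierls_zeros_block peierls_zeros_ones Liminf_peierls_to_zeros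
      peierls_ones_eq_0 peierls_ones_block peierls_ones_zeros Liminf_peierls_to_ones
    by simp
qed

end
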